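(* Let $\Omega\subset\mathbb{R}^3$ be a domain and let $\varphi:\Omega\to\mathbb{C}$ be a twice differentiable function with $\varphi\neq 0$ in $\Omega$. Put $\vec\alpha=\frac{\operatorname{grad}\varphi}{\varphi}$ and $v=\frac{\Delta\varphi}{\varphi}$, so that $\varphi$ solves the Schrödinger equation $-\Delta\varphi+v\varphi=0$. Let $\psi:\Omega\to\mathbb{C}$ be a twice differentiable function which is another solution of $-\Delta\psi+v\psi=0$ in $\Omega$. Then the function $$\vec f=(D-\vec\alpha)\psi=D\psi-\vec\alpha\,\psi$$ satisfies $(D+M^{\vec\alpha})\vec f=0$, i.e. $D\vec f+\vec f\cdot\vec\alpha=0$, in $\Omega$.
   Context: $\mathbb{H}(\mathbb{C})$ denotes the algebra of complex quaternions (biquaternions) $q=\sum_{k=0}^3 q_k i_k$, $q_k\in\mathbb{C}$, where $i_0=1$ and $i_1,i_2,i_3$ are the standard quaternionic imaginary units; vector parts $\vec q=\sum_{k=1}^3q_ki_k$ are identified with vectors of $\mathbb{C}^3$, and the product is $p\cdot q=p_0q_0-\langle\vec p,\vec q\rangle+[\vec p\times\vec q]+p_0\vec q+q_0\vec p$. For a biquaternion $p$, $M^p$ denotes right multiplication: $M^pq=q\cdot p$. The Moisil–Theodoresco operator is $Df=\sum_{k=1}^3 i_k\partial_k f$; for a scalar function $\psi$, $D\psi=\operatorname{grad}\psi$, and for $f=f_0+\vec f$, $Df=-\operatorname{div}\vec f+\operatorname{grad}f_0+\operatorname{rot}\vec f$. *)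

theory Defs
  imports "HOL-Analysis.Analysis"
begin

text \<open>Complex quaternions (biquaternions) q = q0 + q1 i1 + q2 i2 + q3 i3, qk complex.\<close>
datatype bq = BQ (sc: complex) (c1: complex) (c2: complex) (c3: complex)

definition bq_zero :: bq where "bq_zero = BQ 0 0 0 0"
definition bq_add :: "bq \<Rightarrow> bq \<Rightarrow> bq" where
  "bq_add p q = BQ (sc p + sc q) (c1 p + c1 q) (c2 p + c2 q) (c3 p + c3 q)"
definition bq_sub :: "bq \<Rightarrow> bq \<Rightarrow> bq" where
  "bq_sub p q = BQ (sc p - sc q) (c1 p - c1 q) (c2 p - c2 q) (c3 p - c3 q)"
definition bq_scale :: "complex \<Rightarrow> bq \<Rightarrow> bq" where
  "bq_scale a q = BQ (a * sc q) (a * c1 q) (a * c2 q) (a * c3 q)"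

text \<open>p q = p0 q0 - <p,q> + [p x q] + p0 q + q0 p (bilinear inner product, no conjugation).\<close>
definition bq_mult :: "bq \<Rightarrow> bq \<Rightarrow> bq" where
  "bq_mult p q = BQ
     (sc p * sc q - (c1 p * c1 q + c2 p * c2 q + c3 p * c3 q))
     (c2 p * c3 q - c3 p * c2 q + sc p * c1 q + sc q * c1 p)
     (c3 p * c1 q - c1 p * c3 q + sc p * c2 q + sc q * c2 p)
     (c1 p * c2 q - c2 p * c1 q + sc p * c3 q + sc q * c3 p)"

definition Mright :: "bq \<Rightarrow> bq \<Rightarrow> bq" where "Mright p q = bq_mult q p"

definition i1 :: bq where "i1 = BQ 0 1 0 0"
definition i2 :: bq where "i2 = BQ 0 0 1 0"
definition i3 :: bq where "i3 = BQ 0 0 0 1"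

definition pd :: "3 \<Rightarrow> (real^3 \<Rightarrow> complex) \<Rightarrow> real^3 \<Rightarrow> complex" where
  "pd k g x = vector_derivative (\<lambda>t. g (x + t *\<^sub>R axis k 1)) (at 0)"

definition pdq :: "3 \<Rightarrow> (real^3 \<Rightarrow> bq) \<Rightarrow> real^3 \<Rightarrow> bq" where
  "pdq k f x = BQ (pd k (\<lambda>y. sc (f y)) x) (pd k (\<lambda>y. c1 (f y)) x)
                  (pd k (\<lambda>y. c2 (f y)) x) (pd k (\<lambda>y. c3 (f y)) x)"

definition MT :: "(real^3 \<Rightarrow> bq) \<Rightarrow> real^3 \<Rightarrow> bq" where
  "MT f x = bq_add (bq_mult i1 (pdq 1 f x))
              (bq_add (bq_mult i2 (pdq 2 f x)) (bq_mult i3 (pdq 3 f x)))"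

definition scal :: "(real^3 \<Rightarrow> complex) \<Rightarrow> real^3 \<Rightarrow> bq" where
  "scal g x = BQ (g x) 0 0 0"

definition lap :: "(real^3 \<Rightarrow> complex) \<Rightarrow> real^3 \<Rightarrow> complex" where
  "lap g x = pd 1 (pd 1 g) x + pd 2 (pd 2 g) x + pd 3 (pd 3 g) x"

definition twice_diff_on :: "(real^3 \<Rightarrow> complex) \<Rightarrow> (real^3) set \<Rightarrow> bool" where
  "twice_diff_on g S \<longleftrightarrow> (\<forall>x\<in>S. g differentiable (at x) \<and>
      (\<forall>k. (pd k g) differentiable (at x)))"

end

theory Submission imports Defs begin

text \<open>The statement is the factorization
  \<open>(D + M\<^sup>\<alpha>)(D - \<alpha>)\<psi> = -\<Delta>\<psi> + v\<psi>\<close> of the Schroedinger operator, checked pointwise.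
  Writing \<open>f = grad \<psi> - \<psi> \<alpha>\<close>, the vector part of \<open>D f + f \<alpha>\<close> is
  \<open>rot f + f \<times> \<alpha> = -grad \<psi> \<times> \<alpha> - \<psi> rot \<alpha> + grad \<psi> \<times> \<alpha>\<close>, which vanishes because
  \<open>\<alpha> = grad \<phi> / \<phi>\<close> is a gradient (this needs the symmetry of second partial derivatives,
  proved here from twice differentiability by the mean value theorem).  The scalar part is
  \<open>-div f - \<langle>f, \<alpha>\<rangle> = -\<Delta>\<psi> + \<psi> (div \<alpha> + |\<alpha>|\<^sup>2) = -\<Delta>\<psi> + \<psi> \<Delta>\<phi> / \<phi>\<close>.
  Being a pointwise identity, it does not use the connectedness of \<open>\<Omega>\<close>.\<close>

lemma has_vector_derivative_along_line:
  assumes "(g has_derivative g') (at (c + t *\<^sub>R v))"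
  shows "((\<lambda>s. g (c + s *\<^sub>R v)) has_vector_derivative g' v) (at t)"
proof -
  have line: "((\<lambda>s. c + s *\<^sub>R v) has_derivative (\<lambda>s. s *\<^sub>R v)) (at t)"
    by (auto intro!: derivative_eq_intros)
  have "((\<lambda>s. g (c + s *\<^sub>R v)) has_derivative (\<lambda>s. g' (s *\<^sub>R v))) (at t)"
    using has_derivative_compose[OF line assms] by simp
  then show ?thesis
    unfolding has_vector_derivative_def
    using linear_scale[OF has_derivative_linear[OF assms]] by simp
qed

lemma pd_eq_has_derivative:
  assumes "(g has_derivative g') (at x)"
  shows "pd k g x = g' (axis k 1)"
  unfolding pd_def
  by (rule vector_derivative_at) (use has_vector_derivative_along_line[of g g' x 0] assms in simp)

lemma has_vector_derivative_pd_along_axis: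
  assumes "g differentiable (at (c + t *\<^sub>R axis j 1))"
  shows "((\<lambda>s. g (c + s *\<^sub>R axis j 1)) has_vector_derivative pd j g (c + t *\<^sub>R axis j 1)) (at t)"
proof -
  obtain g' where g': "(g has_derivative g') (at (c + t *\<^sub>R axis j 1))"
    using assms differentiable_def by blast
  show ?thesis
    unfolding pd_eq_has_derivative[OF g'] by (rule has_vector_derivative_along_line[OF g'])
qed

lemma pd_const [simp]: "pd k (\<lambda>y. c) x = 0"
  unfolding pd_def by simp

lemma pd_diff:
  assumes "g differentiable (at x)" "h differentiable (at x)"
  shows "pd k (\<lambda>y. g y - h y) x = pd k g x - pd k h x"
proof -
  obtain g' h' where d: "(g has_derivative g') (at x)" "(h has_derivative h') (at x)"
    using assms differentiable_def by metis
  show ?thesis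
    using pd_eq_has_derivative[OF has_derivative_diff[OF d]] pd_eq_has_derivative[OF d(1)]
      pd_eq_has_derivative[OF d(2)] by simp
qed

lemma pd_mult:
  assumes "g differentiable (at x)" "h differentiable (at x)"
  shows "pd k (\<lambda>y. g y * h y) x = g x * pd k h x + pd k g x * h x"
proof -
  obtain g' h' where d: "(g has_derivative g') (at x)" "(h has_derivative h') (at x)"
    using assms differentiable_def by metis
  show ?thesis
    using pd_eq_has_derivative[OF has_derivative_mult[OF d]] pd_eq_has_derivative[OF d(1)]
      pd_eq_has_derivative[OF d(2)] by simp
qed

lemma pd_divide:
  assumes "g differentiable (at x)" "h differentiable (at x)" "h x \<noteq> 0"
  shows "pd k (\<lambda>y. g y / h y) x = (pd k g x * h x - g x * pd k h x) / (h x * h x)"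
proof -
  obtain g' h' where d: "(g has_derivative g') (at x)" "(h has_derivative h') (at x)"
    using assms differentiable_def by metis
  show ?thesis
    using pd_eq_has_derivative[OF has_derivative_divide'[OF d assms(3)]]
      pd_eq_has_derivative[OF d(1)] pd_eq_has_derivative[OF d(2)] by simp
qed

lemma second_difference_linear_bound:
  fixes g :: "real^3 \<Rightarrow> complex"
  assumes L: "linear L" and h: "0 < h" and e: "0 \<le> e"
    and diff: "\<And>y. y \<in> cball x (2 * h) \<Longrightarrow> g differentiable (at y)"
    and approx: "\<And>y. y \<in> cball x (2 * h) \<Longrightarrow>
      norm (pd j g y - pd j g x - L (y - x)) \<le> e * norm (y - x)"
  shows "norm (g (x + h *\<^sub>R axis k 1 + h *\<^sub>R axis j 1) - g (x + h *\<^sub>R axis j 1)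
      - g (x + h *\<^sub>R axis k 1) + g x - (h * h) *\<^sub>R L (axis k 1)) \<le> 3 * e * (h * h)"
proof -
  define u :: "real^3" where "u = axis j 1"
  define w :: "real^3" where "w = axis k 1"
  have nu: "norm u = 1" and nw: "norm w = 1" by (simp_all add: u_def w_def)
  define p where "p t = x + h *\<^sub>R w + t *\<^sub>R u" for t
  define q where "q t = x + t *\<^sub>R u" for t
  have dist_p: "norm (p t - x) \<le> 2 * h" and dist_q: "norm (q t - x) \<le> h"
    if "0 \<le> t" "t \<le> h" for t
  proof -
    have "norm (h *\<^sub>R w + t *\<^sub>R u) \<le> h + t"
      using norm_triangle_ineq[of "h *\<^sub>R w" "t *\<^sub>R u"] nu nw that h by simp
    then show "norm (p t - x) \<le> 2 * h" using that by (simp add: p_def add.assoc)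
    show "norm (q t - x) \<le> h" using nu that by (simp add: q_def)
  qed
  then have in_cball: "p t \<in> cball x (2 * h)" "q t \<in> cball x (2 * h)"
    if "0 \<le> t" "t \<le> h" for t
    using that h by (force simp: dist_norm norm_minus_commute)+
  \<comment> \<open>Subtracting the linear term makes the derivative of \<open>\<Phi>\<close> small, so the mean value
    inequality applies to it.\<close>
  define \<Phi> where "\<Phi> t = g (p t) - g (q t) - t *\<^sub>R (h *\<^sub>R L w)" for t
  define D where "D t = pd j g (p t) - pd j g (q t) - h *\<^sub>R L w" for t
  have \<Phi>_deriv: "(\<Phi> has_vector_derivative D t) (at t)" if "0 \<le> t" "t \<le> h" for t
  proof -
    have "((\<lambda>s. g (p s)) has_vector_derivative pd j g (p t)) (at t)"
      using has_vector_derivative_pd_along_axis[of g "x + h *\<^sub>R w" t j] diff in_cball[OF that]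
      by (simp add: p_def u_def)
    moreover have "((\<lambda>s. g (q s)) has_vector_derivative pd j g (q t)) (at t)"
      using has_vector_derivative_pd_along_axis[of g x t j] diff in_cball[OF that]
      by (simp add: q_def u_def)
    moreover have "((\<lambda>s. s *\<^sub>R (h *\<^sub>R L w)) has_vector_derivative h *\<^sub>R L w) (at t)"
      by (auto intro!: derivative_eq_intros)
    ultimately show ?thesis
      unfolding \<Phi>_def D_def by (intro has_vector_derivative_diff)
  qed
  have "continuous_on {0..h} \<Phi>"
    using \<Phi>_deriv by (meson atLeastAtMost_iff continuous_at_imp_continuous_on
        has_vector_derivative_continuous)
  then obtain \<xi> where \<xi>: "0 < \<xi>" "\<xi> < h" and mvt: "norm (\<Phi> h - \<Phi> 0) \<le> norm (h *\<^sub>R D \<xi>)"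
    using mvt_general[of 0 h \<Phi> "\<lambda>t s. s *\<^sub>R D t"] h \<Phi>_deriv
    unfolding has_vector_derivative_def by auto
  have "D \<xi> = (pd j g (p \<xi>) - pd j g x - L (p \<xi> - x)) - (pd j g (q \<xi>) - pd j g x - L (q \<xi> - x))"
    unfolding D_def p_def q_def using linear_add[OF L] linear_scale[OF L]
    by (simp add: algebra_simps)
  then have "norm (D \<xi>) \<le> norm (pd j g (p \<xi>) - pd j g x - L (p \<xi> - x))
      + norm (pd j g (q \<xi>) - pd j g x - L (q \<xi> - x))"
    by (simp only: norm_triangle_ineq4)
  also have "\<dots> \<le> e * norm (p \<xi> - x) + e * norm (q \<xi> - x)"
    using approx in_cball \<xi> by (intro add_mono) auto
  also have "\<dots> \<le> e * (2 * h) + e * h"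
    using dist_p dist_q \<xi> e by (intro add_mono mult_left_mono) auto
  finally have "norm (h *\<^sub>R D \<xi>) \<le> 3 * e * (h * h)"
    using h by (simp add: mult_left_mono algebra_simps)
  with mvt have "norm (\<Phi> h - \<Phi> 0) \<le> 3 * e * (h * h)" by linarith
  moreover have "\<Phi> h - \<Phi> 0 = g (x + h *\<^sub>R w + h *\<^sub>R u) - g (x + h *\<^sub>R u)
      - g (x + h *\<^sub>R w) + g x - (h * h) *\<^sub>R L w"
    unfolding \<Phi>_def p_def q_def by (simp add: algebra_simps)
  ultimately show ?thesis
    unfolding u_def w_def by simp
qed

lemma eventually_second_difference_approx:
  fixes g :: "real^3 \<Rightarrow> complex"
  assumes r: "0 < r" and diff: "\<And>y. y \<in> ball x r \<Longrightarrow> g differentiable (at y)"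
    and diff_pd: "pd j g differentiable (at x)" and e: "0 < e"
  shows "\<forall>\<^sub>F h in at_right 0. norm (g (x + h *\<^sub>R axis k 1 + h *\<^sub>R axis j 1)
      - g (x + h *\<^sub>R axis j 1) - g (x + h *\<^sub>R axis k 1) + g x
      - (h * h) *\<^sub>R pd k (pd j g) x) \<le> e * (h * h)"
proof -
  obtain L where L: "(pd j g has_derivative L) (at x)"
    using diff_pd differentiable_def by blast
  obtain d where d: "0 < d" and approx: "\<And>y. norm (y - x) < d \<Longrightarrow>
      norm (pd j g y - pd j g x - L (y - x)) \<le> (e / 3) * norm (y - x)"
    using L e unfolding has_derivative_at_alt by (meson divide_pos_pos zero_less_numeral)
  have "norm (g (x + h *\<^sub>R axis k 1 + h *\<^sub>R axis j 1) - g (x + h *\<^sub>R axis j 1)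
      - g (x + h *\<^sub>R axis k 1) + g x - (h * h) *\<^sub>R L (axis k 1)) \<le> e * (h * h)"
    if h: "0 < h" "h < min (d / 2) (r / 2)" for h
    using second_difference_linear_bound[OF has_derivative_linear[OF L] h(1), of "e / 3" x g j k]
      diff approx e h by (force simp: dist_norm norm_minus_commute)
  then show ?thesis
    unfolding pd_eq_has_derivative[OF L] eventually_at_right_field
    using d r by (intro exI[of _ "min (d / 2) (r / 2)"]) auto
qed

lemma pd_commute:
  fixes g :: "real^3 \<Rightarrow> complex"
  assumes "open S" "x \<in> S" "twice_diff_on g S"
  shows "pd k (pd j g) x = pd j (pd k g) x"
proof -
  obtain r where r: "0 < r" "ball x r \<subseteq> S"
    using assms(1,2) open_contains_ball by blast
  have diff: "\<And>y. y \<in> ball x r \<Longrightarrow> g differentiable (at y)"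
    and diff_pd: "\<And>i. pd i g differentiable (at x)"
    using r assms(2,3) unfolding twice_diff_on_def by blast+
  define A where "A = pd k (pd j g) x"
  define B where "B = pd j (pd k g) x"
  \<comment> \<open>The second difference \<open>\<Delta> h\<close> is symmetric in \<open>j\<close> and \<open>k\<close>, and \<open>\<Delta> h / h\<^sup>2\<close> tends to both \<open>A\<close> and \<open>B\<close>.\<close>
  have "norm (A - B) \<le> 2 * e" if e: "0 < e" for e
  proof -
    define \<Delta> where "\<Delta> h = g (x + h *\<^sub>R axis k 1 + h *\<^sub>R axis j 1) - g (x + h *\<^sub>R axis j 1)
       - g (x + h *\<^sub>R axis k 1) + g x" for h :: real
    have "\<forall>\<^sub>F h in at_right 0. norm (\<Delta> h - (h * h) *\<^sub>R A) \<le> e * (h * h)"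
      using eventually_second_difference_approx[OF r(1) diff diff_pd e]
      unfolding A_def \<Delta>_def .
    moreover have "\<forall>\<^sub>F h in at_right 0. norm (\<Delta> h - (h * h) *\<^sub>R B) \<le> e * (h * h)"
      using eventually_second_difference_approx[OF r(1) diff diff_pd e, where j=k and k=j]
      unfolding B_def \<Delta>_def by (simp add: algebra_simps)
    moreover note eventually_at_right_less[of "0::real"]
    ultimately have "\<forall>\<^sub>F h in at_right 0. 0 < h \<and> norm (\<Delta> h - (h * h) *\<^sub>R A) \<le> e * (h * h)
        \<and> norm (\<Delta> h - (h * h) *\<^sub>R B) \<le> e * (h * h)"
      by eventually_elim blast
    then obtain h where h: "0 < h" and "norm (\<Delta> h - (h * h) *\<^sub>R A) \<le> e * (h * h)"
        "norm (\<Delta> h - (h * h) *\<^sub>R B) \<le> e * (h * h)"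
      using eventually_happens trivial_limit_at_right_real by blast
    then have "norm ((h * h) *\<^sub>R (A - B)) \<le> (h * h) * (2 * e)"
      using norm_triangle_ineq4[of "\<Delta> h - (h * h) *\<^sub>R B" "\<Delta> h - (h * h) *\<^sub>R A"]
      by (simp add: algebra_simps)
    with h show ?thesis by (simp add: mult_le_cancel_left_pos)
  qed
  from this[of "norm (A - B) / 4"] show ?thesis
    unfolding A_def B_def by (cases "A = B") auto
qed

lemma MT_BQ:
  "MT (\<lambda>y. BQ (f0 y) (f1 y) (f2 y) (f3 y)) x =
    BQ (- (pd 1 f1 x + pd 2 f2 x + pd 3 f3 x))
       (pd 1 f0 x + pd 2 f3 x - pd 3 f2 x)
       (pd 2 f0 x + pd 3 f1 x - pd 1 f3 x)
       (pd 3 f0 x + pd 1 f2 x - pd 2 f1 x)"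
  unfolding MT_def pdq_def bq_mult_def bq_add_def i1_def i2_def i3_def by simp

lemma MT_scal: "MT (scal g) x = BQ 0 (pd 1 g x) (pd 2 g x) (pd 3 g x)"
  using MT_BQ[of g "\<lambda>y. 0" "\<lambda>y. 0" "\<lambda>y. 0" x] by (simp add: scal_def[abs_def])

lemma pd_partial_minus_log_partial:
  assumes "\<phi> differentiable (at x)" "pd j \<phi> differentiable (at x)" "\<phi> x \<noteq> 0"
    and "\<psi> differentiable (at x)" "pd j \<psi> differentiable (at x)"
  shows "pd k (\<lambda>y. pd j \<psi> y - \<psi> y * (pd j \<phi> y / \<phi> y)) x =
    pd k (pd j \<psi>) x - pd k \<psi> x * (pd j \<phi> x / \<phi> x)
    - \<psi> x * (pd k (pd j \<phi>) x * \<phi> x - pd j \<phi> x * pd k \<phi> x) / (\<phi> x * \<phi> x)"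
proof -
  have "pd k (\<lambda>y. pd j \<phi> y / \<phi> y) x =
      (pd k (pd j \<phi>) x * \<phi> x - pd j \<phi> x * pd k \<phi> x) / (\<phi> x * \<phi> x)"
    using assms by (intro pd_divide)
  moreover have "pd k (\<lambda>y. \<psi> y * (pd j \<phi> y / \<phi> y)) x =
      \<psi> x * pd k (\<lambda>y. pd j \<phi> y / \<phi> y) x + pd k \<psi> x * (pd j \<phi> x / \<phi> x)"
    using assms by (intro pd_mult differentiable_divide)
  moreover have "pd k (\<lambda>y. pd j \<psi> y - \<psi> y * (pd j \<phi> y / \<phi> y)) x =
      pd k (pd j \<psi>) x - pd k (\<lambda>y. \<psi> y * (pd j \<phi> y / \<phi> y)) x"
    using assms by (intro pd_diff differentiable_mult differentiable_divide)
  ultimately show ?thesis by simp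
qed

lemma Schroedinger_factorization:
  fixes \<phi> \<psi> :: "real^3 \<Rightarrow> complex"
  assumes "\<phi> differentiable (at x)" "\<And>k. pd k \<phi> differentiable (at x)" "\<phi> x \<noteq> 0"
    and "\<psi> differentiable (at x)" "\<And>k. pd k \<psi> differentiable (at x)"
    and sym_\<phi>: "\<And>j k. pd k (pd j \<phi>) x = pd j (pd k \<phi>) x"
    and sym_\<psi>: "\<And>j k. pd k (pd j \<psi>) x = pd j (pd k \<psi>) x"
  defines "\<alpha> \<equiv> \<lambda>y. bq_scale (1 / \<phi> y) (MT (scal \<phi>) y)"
  defines "f \<equiv> \<lambda>y. bq_sub (MT (scal \<psi>) y) (bq_scale (\<psi> y) (\<alpha> y))"
  shows "bq_add (MT f x) (Mright (\<alpha> x) (f x)) = scal (\<lambda>y. - lap \<psi> y + lap \<phi> y / \<phi> y * \<psi> y) x"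
proof -
  define F where "F j y = pd j \<psi> y - \<psi> y * (pd j \<phi> y / \<phi> y)" for j y
  have f_eq: "f = (\<lambda>y. BQ 0 (F 1 y) (F 2 y) (F 3 y))"
    unfolding f_def \<alpha>_def F_def by (simp add: MT_scal bq_sub_def bq_scale_def)
  have \<alpha>_eq: "\<alpha> x = BQ 0 (pd 1 \<phi> x / \<phi> x) (pd 2 \<phi> x / \<phi> x) (pd 3 \<phi> x / \<phi> x)"
    unfolding \<alpha>_def by (simp add: MT_scal bq_scale_def)
  have pd_F: "pd k (F j) x = pd k (pd j \<psi>) x - pd k \<psi> x * (pd j \<phi> x / \<phi> x)
      - \<psi> x * (pd k (pd j \<phi>) x * \<phi> x - pd j \<phi> x * pd k \<phi> x) / (\<phi> x * \<phi> x)" for j k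
    unfolding F_def using assms(1-5) by (intro pd_partial_minus_log_partial)
  show ?thesis
    unfolding f_eq \<alpha>_eq
    apply (simp add: MT_BQ pd_F Mright_def bq_add_def bq_mult_def scal_def lap_def)
    apply (simp add: F_def)
    apply (intro conjI)
    using \<open>\<phi> x \<noteq> 0\<close> apply (simp_all add: field_simps sym_\<phi>[of 2 3] sym_\<psi>[of 2 3]
        sym_\<phi>[of 3 1] sym_\<psi>[of 3 1] sym_\<phi>[of 1 2] sym_\<psi>[of 1 2])
    done
qed

theorem proposition1:
  fixes \<Omega> :: "(real^3) set" and \<phi> \<psi> :: "real^3 \<Rightarrow> complex"
  assumes "open \<Omega>" and "connected \<Omega>"
    and "twice_diff_on \<phi> \<Omega>" and "\<forall>x\<in>\<Omega>. \<phi> x \<noteq> 0"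
    and "twice_diff_on \<psi> \<Omega>"
    and "\<forall>x\<in>\<Omega>. - lap \<psi> x + (lap \<phi> x / \<phi> x) * \<psi> x = 0"
  defines "\<alpha> \<equiv> \<lambda>x. bq_scale (1 / \<phi> x) (MT (scal \<phi>) x)"
  defines "f \<equiv> \<lambda>x. bq_sub (MT (scal \<psi>) x) (bq_scale (\<psi> x) (\<alpha> x))"
  shows "\<forall>x\<in>\<Omega>. bq_add (MT f x) (Mright (\<alpha> x) (f x)) = bq_zero"
proof
  fix x assume x: "x \<in> \<Omega>"
  have "bq_add (MT f x) (Mright (\<alpha> x) (f x)) = scal (\<lambda>y. - lap \<psi> y + lap \<phi> y / \<phi> y * \<psi> y) x"
    unfolding f_def \<alpha>_def
  proof (rule Schroedinger_factorization)
    show "\<phi> differentiable (at x)" "\<And>k. pd k \<phi> differentiable (at x)"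
      "\<psi> differentiable (at x)" "\<And>k. pd k \<psi> differentiable (at x)"
      using assms(3,5) x unfolding twice_diff_on_def by blast+
    show "\<phi> x \<noteq> 0" using assms(4) x by blast
    show "\<And>j k. pd k (pd j \<phi>) x = pd j (pd k \<phi>) x" "\<And>j k. pd k (pd j \<psi>) x = pd j (pd k \<psi>) x"
      using pd_commute[OF assms(1) x] assms(3,5) by blast+
  qed
  with assms(6) x show "bq_add (MT f x) (Mright (\<alpha> x) (f x)) = bq_zero"
    by (simp add: scal_def bq_zero_def)
qed

end
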